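(* Fix $\alpha\in\mathbb{D}\setminus\{0\}$, let $\psi(z)=\frac{\sqrt{1-|\alpha|^2}}{1-\bar\alpha z}$, $\theta(z)=\frac{\bar\alpha}{\alpha}\frac{\alpha-z}{1-\bar\alpha z}$, and let $C_{\psi,\theta}$ be the conjugation on $H^2(\mathbb{D})$ given by $(C_{\psi,\theta}f)(z)=\psi(z)\overline{f(\overline{\theta(z)})}$. Let $\varphi(z)=\varphi_{-1}\bar z+\varphi_0+\varphi_1z$ on $\mathbb{T}$ with $\varphi_{-1},\varphi_0,\varphi_1\in\mathbb{C}$. Then $T_\varphi$ is $C_{\psi,\theta}$-symmetric if and only if $\varphi$ is a constant function.
   Context: A conjugation is an anti-linear, involutive, isometric map; $T$ is $C$-symmetric if $CT^*C=T$. $H^2(\mathbb{D})$ is the Hardy space of the disc and $T_\varphi f=P_{H^2(\mathbb{D})}(\varphi f)$ for $\varphi\in L^\infty(\mathbb{T})$. *)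

theory Defs
  imports "HOL-Analysis.Analysis"
begin

definition taylor_coeff :: "(complex \<Rightarrow> complex) \<Rightarrow> nat \<Rightarrow> complex" where
  "taylor_coeff f n = (deriv ^^ n) f 0 / of_nat (fact n)"

text \<open>The Hardy space H^2 of the unit disc: holomorphic functions on the disc whose
  Taylor coefficients are square summable (only values on the disc matter).\<close>
definition H2 :: "(complex \<Rightarrow> complex) set" where
  "H2 = {f. f holomorphic_on ball 0 1 \<and> summable (\<lambda>n. (cmod (taylor_coeff f n))^2)}"

definition h2_inner :: "(complex \<Rightarrow> complex) \<Rightarrow> (complex \<Rightarrow> complex) \<Rightarrow> complex" where
  "h2_inner f g = (\<Sum>n. taylor_coeff f n * cnj (taylor_coeff g n))"

text \<open>Toeplitz operator T_phi f = P_{H^2}(phi f), for a symbol phi given by its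
  (finitely supported) Fourier coefficients phihat : int => complex. The n-th Fourier
  coefficient of phi f is sum_k phihat(n-k) a_k; the projection keeps n >= 0.\<close>
definition toeplitz :: "(int \<Rightarrow> complex) \<Rightarrow> (complex \<Rightarrow> complex) \<Rightarrow> (complex \<Rightarrow> complex)" where
  "toeplitz phihat f = (\<lambda>z. \<Sum>n. (\<Sum>k. phihat (int n - int k) * taylor_coeff f k) * z ^ n)"

text \<open>Fourier coefficients of phi(z) = phim1 * conj z + phi0 + phi1 * z on the circle.\<close>
definition trig_coeffs :: "complex \<Rightarrow> complex \<Rightarrow> complex \<Rightarrow> int \<Rightarrow> complex" where
  "trig_coeffs phim1 phi0 phi1 k =
     (if k = -1 then phim1 else if k = 0 then phi0 else if k = 1 then phi1 else 0)"

definition is_adjoint ::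
  "((complex \<Rightarrow> complex) \<Rightarrow> (complex \<Rightarrow> complex)) \<Rightarrow> ((complex \<Rightarrow> complex) \<Rightarrow> (complex \<Rightarrow> complex)) \<Rightarrow> bool" where
  "is_adjoint T S \<longleftrightarrow> (\<forall>f\<in>H2. T f \<in> H2 \<and> S f \<in> H2) \<and>
     (\<forall>f\<in>H2. \<forall>g\<in>H2. h2_inner (T f) g = h2_inner f (S g))"

definition C_symmetric ::
  "((complex \<Rightarrow> complex) \<Rightarrow> (complex \<Rightarrow> complex)) \<Rightarrow> ((complex \<Rightarrow> complex) \<Rightarrow> (complex \<Rightarrow> complex)) \<Rightarrow> bool" where
  "C_symmetric C T \<longleftrightarrow> (\<exists>S. is_adjoint T S \<and> (\<forall>f\<in>H2. \<forall>z\<in>ball 0 1. C (S (C f)) z = T f z))"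

definition psi_fun :: "complex \<Rightarrow> complex \<Rightarrow> complex" where
  "psi_fun \<alpha> z = complex_of_real (sqrt (1 - (cmod \<alpha>)^2)) / (1 - cnj \<alpha> * z)"

definition theta_fun :: "complex \<Rightarrow> complex \<Rightarrow> complex" where
  "theta_fun \<alpha> z = (cnj \<alpha> / \<alpha>) * ((\<alpha> - z) / (1 - cnj \<alpha> * z))"

definition C_psi_theta :: "complex \<Rightarrow> (complex \<Rightarrow> complex) \<Rightarrow> (complex \<Rightarrow> complex)" where
  "C_psi_theta \<alpha> f = (\<lambda>z. psi_fun \<alpha> z * cnj (f (cnj (theta_fun \<alpha> z))))"

end

theory Submission
  imports Defs "HOL-Complex_Analysis.Complex_Analysis"
begin

(* For a constant symbol c, T is multiplication by c, its adjoint is multiplication by cnj c,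
   and C is an involution, so C T^* C = T.
   Conversely, C maps 1 to the normalised reproducing kernel psi, and computing the Taylor
   coefficients of T^* psi against the monomials shows that T^* acts on psi as multiplication
   by cnj (phi0 + phi1 alpha) + cnj phim1 z. Applying C and comparing with T 1 = phi0 + phi1 z
   gives phim1 theta(z) = phi1 (z - alpha) on the disc; evaluating at z = 0 and z = -alpha
   forces phim1 = phi1 = 0, which is exactly constancy of phi on the circle. *)

lemma sums_delta_mult: "(\<lambda>n. (if n = m then 1 else 0) * g n) sums (g m :: 'a :: real_normed_algebra_1)"
proof -
  have "(\<lambda>n. (if n = m then 1 else 0) * g n) = (\<lambda>n. if n = m then g n else 0)" by auto
  then show ?thesis using sums_single[of m g] by simp
qed

lemma sums_shift_power:
  fixes c :: "nat \<Rightarrow> 'a :: real_normed_field"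
  assumes "(\<lambda>n. c n * z ^ n) sums s"
  shows "(\<lambda>n. (if n = 0 then 0 else c (n - 1)) * z ^ n) sums (z * s)"
proof -
  have "(\<lambda>n. (if Suc n = 0 then 0 else c (Suc n - 1)) * z ^ Suc n) sums (z * s)"
    using sums_mult[OF assms, of z] by (simp add: mult_ac)
  then show ?thesis by (subst (asm) sums_Suc_iff) simp
qed

lemma power_series_unit_disc:
  fixes c :: "nat \<Rightarrow> complex"
  assumes sums: "\<And>z. z \<in> ball 0 1 \<Longrightarrow> (\<lambda>n. c n * z ^ n) sums f z"
  shows "f holomorphic_on ball 0 1" and "taylor_coeff f = c"
proof -
  define F where "F = Abs_fps c"
  have radius: "fps_conv_radius F \<ge> 1"
    unfolding fps_conv_radius_def F_def fps_nth_Abs_fps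
  proof (rule conv_radius_geI_ex')
    fix r :: real
    assume "0 < r" "ereal r < 1"
    then have "of_real r \<in> ball (0::complex) 1" by auto
    then show "summable (\<lambda>n. c n * of_real r ^ n)" using sums sums_summable by blast
  qed
  have eval: "eval_fps F z = f z" if "z \<in> ball 0 1" for z
    unfolding eval_fps_def F_def fps_nth_Abs_fps using sums[OF that] sums_unique by metis
  have "ball (0::complex) 1 \<subseteq> eball 0 (fps_conv_radius F)"
  proof
    fix z :: complex
    assume "z \<in> ball 0 1"
    then have "ereal (dist 0 z) < 1" by simp
    then have "ereal (dist 0 z) < fps_conv_radius F" using radius by (rule order_less_le_trans)
    then show "z \<in> eball 0 (fps_conv_radius F)" by simp
  qed
  then have "eval_fps F holomorphic_on ball 0 1" by (rule holomorphic_on_eval_fps)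
  then show "f holomorphic_on ball 0 1" using eval holomorphic_cong by metis
  have "fps_conv_radius F > 0" using radius by (rule order_less_le_trans[rotated]) simp
  moreover have "\<forall>\<^sub>F z in nhds 0. z \<in> ball (0::complex) 1"
    by (rule eventually_nhds_in_open) auto
  then have "\<forall>\<^sub>F z in nhds 0. eval_fps F z = f z"
    by eventually_elim (use eval in auto)
  ultimately have "f has_fps_expansion F" by (simp add: has_fps_expansion_def)
  then show "taylor_coeff f = c"
    using fps_nth_fps_expansion[of f F] by (simp add: fun_eq_iff taylor_coeff_def F_def)
qed

lemma H2_sums:
  assumes "f \<in> H2" and "z \<in> ball 0 1"
  shows "(\<lambda>n. taylor_coeff f n * z ^ n) sums f z"
  using assms holomorphic_power_series[of f 0 1 z] by (simp add: H2_def taylor_coeff_def)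

lemma in_H2_power_series:
  assumes "\<And>z. z \<in> ball 0 1 \<Longrightarrow> (\<lambda>n. c n * z ^ n) sums f z"
    and "summable (\<lambda>n. (cmod (c n))\<^sup>2)"
  shows "f \<in> H2"
  using assms power_series_unit_disc[OF assms(1)] by (simp add: H2_def)

lemma H2_cmult:
  assumes "f \<in> H2"
  shows "(\<lambda>z. k * f z) \<in> H2" and "taylor_coeff (\<lambda>z. k * f z) = (\<lambda>n. k * taylor_coeff f n)"
proof -
  have sums: "(\<lambda>n. k * taylor_coeff f n * z ^ n) sums (k * f z)" if "z \<in> ball 0 1" for z
    using sums_mult[OF H2_sums[OF assms that], of k] by (simp add: mult.assoc)
  then show "taylor_coeff (\<lambda>z. k * f z) = (\<lambda>n. k * taylor_coeff f n)"
    by (rule power_series_unit_disc)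
  have "summable (\<lambda>n. (cmod k)\<^sup>2 * (cmod (taylor_coeff f n))\<^sup>2)"
    using assms by (intro summable_mult) (simp add: H2_def)
  then show "(\<lambda>z. k * f z) \<in> H2"
    by (intro in_H2_power_series[OF sums]) (simp_all add: norm_mult power_mult_distrib)
qed

lemma taylor_coeff_power: "taylor_coeff (\<lambda>z. z ^ m) = (\<lambda>n. if n = m then 1 else 0)"
  and power_in_H2: "(\<lambda>z. z ^ m) \<in> H2"
proof -
  have sums: "(\<lambda>n. (if n = m then 1 else 0) * z ^ n) sums (z ^ m)" for z :: complex
    by (rule sums_delta_mult)
  then show "taylor_coeff (\<lambda>z. z ^ m) = (\<lambda>n. if n = m then 1 else 0)"
    by (rule power_series_unit_disc)
  show "(\<lambda>z. z ^ m) \<in> H2"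
  proof (rule in_H2_power_series[OF sums])
    show "summable (\<lambda>n. (cmod (if n = m then 1 else 0 :: complex))\<^sup>2)"
      by (rule summable_finite[of "{m}"]) auto
  qed
qed

lemma h2_inner_power_left: "h2_inner (\<lambda>z. z ^ m) g = cnj (taylor_coeff g m)"
  using sums_delta_mult[of m "\<lambda>n. cnj (taylor_coeff g n)"]
  by (simp add: h2_inner_def taylor_coeff_power sums_iff)

lemma taylor_coeff_adjoint:
  assumes "is_adjoint T S" and "g \<in> H2"
  shows "taylor_coeff (S g) m = cnj (h2_inner (T (\<lambda>z. z ^ m)) g)"
  using assms power_in_H2 by (simp add: is_adjoint_def h2_inner_power_left)

lemma H2_eq_on_ball:
  assumes "g \<in> H2" and "\<And>z. z \<in> ball 0 1 \<Longrightarrow> f z = g z"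
  shows "f \<in> H2" and "taylor_coeff f = taylor_coeff g"
proof -
  have sums: "(\<lambda>n. taylor_coeff g n * z ^ n) sums f z" if "z \<in> ball 0 1" for z
    using H2_sums[OF assms(1) that] assms(2)[OF that] by simp
  then show "taylor_coeff f = taylor_coeff g" by (rule power_series_unit_disc)
  show "f \<in> H2"
  proof (rule in_H2_power_series[OF sums])
    show "summable (\<lambda>n. (cmod (taylor_coeff g n))\<^sup>2)" using assms(1) by (simp add: H2_def)
  qed
qed

lemma toeplitz_power_sums:
  assumes "\<And>k. k > int N \<Longrightarrow> phihat k = 0"
  shows "(\<lambda>n. phihat (int n - int m) * z ^ n) sums toeplitz phihat (\<lambda>z. z ^ m) z"
proof -
  have inner: "(\<Sum>k. phihat (int n - int k) * taylor_coeff (\<lambda>z. z ^ m) k) = phihat (int n - int m)"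
    for n
    using sums_delta_mult[of m "\<lambda>k. phihat (int n - int k)"]
    by (simp add: taylor_coeff_power sums_iff mult.commute)
  have "summable (\<lambda>n. phihat (int n - int m) * z ^ n)"
    by (rule summable_finite[of "{..m + N}"]) (auto simp: assms)
  then show ?thesis by (simp add: toeplitz_def inner summable_sums)
qed

lemma taylor_coeff_toeplitz_power:
  assumes "\<And>k. k > int N \<Longrightarrow> phihat k = 0"
  shows "taylor_coeff (toeplitz phihat (\<lambda>z. z ^ m)) n = phihat (int n - int m)"
proof -
  have "taylor_coeff (toeplitz phihat (\<lambda>z. z ^ m)) = (\<lambda>n. phihat (int n - int m))"
    by (rule power_series_unit_disc) (rule toeplitz_power_sums[OF assms])
  then show ?thesis by simp
qed

lemma sums_trig_coeffs:
  "(\<lambda>n. trig_coeffs x y w (int n - int m) * X n) sums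
     (y * X m + w * X (Suc m) + (if m = 0 then 0 else x * X (m - 1)))"
proof (cases m)
  case 0
  have "(\<lambda>n. trig_coeffs x y w (int n - int m) * X n) =
      (\<lambda>n. (if n = m then 1 else 0) * (y * X n) + (if n = Suc m then 1 else 0) * (w * X n))"
    using 0 by (auto simp: fun_eq_iff trig_coeffs_def)
  then show ?thesis using 0 sums_add[OF sums_delta_mult sums_delta_mult] by simp
next
  case (Suc j)
  have "(\<lambda>n. trig_coeffs x y w (int n - int m) * X n) =
      (\<lambda>n. (if n = m then 1 else 0) * (y * X n) + (if n = Suc m then 1 else 0) * (w * X n)
         + (if n = j then 1 else 0) * (x * X n))"
    using Suc by (auto simp: fun_eq_iff trig_coeffs_def)
  then show ?thesis
    using Suc sums_add[OF sums_add[OF sums_delta_mult sums_delta_mult] sums_delta_mult] by simp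
qed

lemma taylor_coeff_toeplitz_trig_power:
  "taylor_coeff (toeplitz (trig_coeffs x y w) (\<lambda>z. z ^ m)) n = trig_coeffs x y w (int n - int m)"
  by (rule taylor_coeff_toeplitz_power[of 1]) (simp add: trig_coeffs_def)

lemma toeplitz_trig_one: "toeplitz (trig_coeffs x y w) (\<lambda>_. 1) z = y + w * z"
proof -
  have "(\<lambda>n. trig_coeffs x y w (int n - int 0) * z ^ n) sums toeplitz (trig_coeffs x y w) (\<lambda>z. z ^ 0) z"
    by (rule toeplitz_power_sums[of 1]) (simp add: trig_coeffs_def)
  from sums_unique2[OF this sums_trig_coeffs[of x y w 0 "\<lambda>n. z ^ n"]] show ?thesis by simp
qed

lemma h2_inner_toeplitz_trig_power:
  assumes "\<And>n. taylor_coeff g n = cnj (X n)"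
  shows "h2_inner (toeplitz (trig_coeffs x y w) (\<lambda>z. z ^ m)) g =
    y * X m + w * X (Suc m) + (if m = 0 then 0 else x * X (m - 1))"
  using sums_trig_coeffs[of x y w m X]
  unfolding h2_inner_def taylor_coeff_toeplitz_trig_power assms by (simp add: sums_iff)

lemma toeplitz_const_symbol:
  assumes "f \<in> H2" and "z \<in> ball 0 1"
  shows "toeplitz (trig_coeffs 0 c 0) f z = c * f z"
proof -
  have inner: "(\<Sum>k. trig_coeffs 0 c 0 (int n - int k) * taylor_coeff f k) = c * taylor_coeff f n" for n
  proof -
    have "(\<lambda>k. trig_coeffs 0 c 0 (int n - int k) * taylor_coeff f k) =
        (\<lambda>k. (if k = n then 1 else 0) * (c * taylor_coeff f k))"
      by (auto simp: fun_eq_iff trig_coeffs_def)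
    then show ?thesis using sums_delta_mult[of n "\<lambda>k. c * taylor_coeff f k"] by (simp add: sums_iff)
  qed
  have "(\<lambda>n. c * taylor_coeff f n * z ^ n) sums (c * f z)"
    using sums_mult[OF H2_sums[OF assms], of c] by (simp add: mult.assoc)
  then show ?thesis by (simp add: toeplitz_def inner sums_iff)
qed

lemma is_adjoint_toeplitz_const:
  "is_adjoint (toeplitz (trig_coeffs 0 c 0)) (\<lambda>g z. cnj c * g z)"
proof -
  have T: "toeplitz (trig_coeffs 0 c 0) f \<in> H2"
    "taylor_coeff (toeplitz (trig_coeffs 0 c 0) f) = (\<lambda>n. c * taylor_coeff f n)"
    if f: "f \<in> H2" for f
    using H2_eq_on_ball[OF H2_cmult(1)[OF f] toeplitz_const_symbol[OF f]] H2_cmult(2)[OF f] by auto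
  show ?thesis
    unfolding is_adjoint_def h2_inner_def by (simp add: T H2_cmult, simp add: mult_ac)
qed

lemma one_minus_mult_neq_0: "cmod a < 1 \<Longrightarrow> cmod z < 1 \<Longrightarrow> 1 - a * z \<noteq> (0 :: complex)"
  using norm_mult_less[of a 1 z 1] by auto

lemma psi_fun_sums:
  assumes "cmod a < 1" and "z \<in> ball 0 1"
  shows "(\<lambda>n. (of_real (sqrt (1 - (cmod a)\<^sup>2)) * cnj a ^ n) * z ^ n) sums psi_fun a z"
proof -
  have "cmod (cnj a * z) < 1" using assms norm_mult_less[of "cnj a" 1 z 1] by simp
  from sums_mult[OF geometric_sums[OF this], of "of_real (sqrt (1 - (cmod a)\<^sup>2))"]
  show ?thesis by (simp add: psi_fun_def power_mult_distrib mult.assoc)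
qed

lemma taylor_coeff_psi_fun:
  "cmod a < 1 \<Longrightarrow> taylor_coeff (psi_fun a) n = of_real (sqrt (1 - (cmod a)\<^sup>2)) * cnj a ^ n"
  using power_series_unit_disc(2)[OF psi_fun_sums] by simp

lemma psi_fun_in_H2:
  assumes "cmod a < 1"
  shows "psi_fun a \<in> H2"
proof (rule in_H2_power_series[OF psi_fun_sums[OF assms]])
  have "summable (\<lambda>n. (1 - (cmod a)\<^sup>2) * ((cmod a)\<^sup>2) ^ n)"
    using assms by (intro summable_mult summable_geometric) (simp add: abs_square_less_1)
  then show "summable (\<lambda>n. (cmod (of_real (sqrt (1 - (cmod a)\<^sup>2)) * cnj a ^ n))\<^sup>2)"
    using assms abs_square_less_1[of "cmod a"]
    by (simp add: norm_mult norm_power power_mult_distrib power_mult[symmetric] mult.commute)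
qed

lemma norm_theta_fun_less_1:
  assumes "cmod a < 1" and "a \<noteq> 0" and "cmod z < 1"
  shows "cmod (theta_fun a z) < 1"
proof -
  have "cmod (theta_fun a z) = cmod (cnj a / a) * cmod ((a - z) / (1 - cnj a * z))"
    unfolding theta_fun_def by (rule norm_mult)
  also have "\<dots> = cmod (Moebius_function 0 a z)"
    using assms(2) by (simp add: Moebius_function_simple norm_divide norm_minus_commute)
  also have "\<dots> < 1" by (rule Moebius_function_norm_lt_1[OF assms(1,3)])
  finally show ?thesis .
qed

lemma
  assumes "cmod a < 1" and "a \<noteq> 0" and "cmod z < 1"
  shows theta_fun_involution: "cnj (theta_fun a (cnj (theta_fun a z))) = z"
    and psi_fun_theta_fun: "psi_fun a z * cnj (psi_fun a (cnj (theta_fun a z))) = 1"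
proof -
  have d: "1 - cnj a * z \<noteq> 0" and d': "1 - a * cnj a \<noteq> 0"
    using one_minus_mult_neq_0[of "cnj a"] one_minus_mult_neq_0[of a] assms by auto
  have denom: "1 - a * theta_fun a z = (1 - a * cnj a) / (1 - cnj a * z)"
    using d assms(2) by (simp add: theta_fun_def field_simps)
  have numer: "cnj a - theta_fun a z = (cnj a / a) * z * (1 - a * cnj a) / (1 - cnj a * z)"
    using d assms(2) by (simp add: theta_fun_def field_simps)
  have "cnj (theta_fun a (cnj (theta_fun a z))) = (a / cnj a) * ((cnj a - theta_fun a z) / (1 - a * theta_fun a z))"
    by (simp add: theta_fun_def)
  also have "\<dots> = z" using d d' assms(2) by (simp add: denom numer)
  finally show "cnj (theta_fun a (cnj (theta_fun a z))) = z" .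
  have "of_real (sqrt (1 - (cmod a)\<^sup>2)) * of_real (sqrt (1 - (cmod a)\<^sup>2)) = 1 - a * cnj a"
    using assms(1) abs_square_less_1[of "cmod a"] complex_norm_square[of a]
    by (simp flip: of_real_mult)
  then show "psi_fun a z * cnj (psi_fun a (cnj (theta_fun a z))) = 1"
    using d d' by (simp add: psi_fun_def denom)
qed

lemma C_psi_theta_involution:
  assumes "cmod a < 1" and "a \<noteq> 0" and "z \<in> ball 0 1"
  shows "C_psi_theta a (C_psi_theta a f) z = f z"
  using assms psi_fun_theta_fun[of a z] theta_fun_involution[of a z]
  by (simp add: C_psi_theta_def mult.assoc[symmetric])

lemma C_symmetric_toeplitz_const:
  assumes "cmod a < 1" and "a \<noteq> 0"
  shows "C_symmetric (C_psi_theta a) (toeplitz (trig_coeffs 0 c 0))"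
  unfolding C_symmetric_def
proof (intro exI conjI ballI)
  show "is_adjoint (toeplitz (trig_coeffs 0 c 0)) (\<lambda>g z. cnj c * g z)"
    by (rule is_adjoint_toeplitz_const)
  fix f and z :: complex
  assume "f \<in> H2" and "z \<in> ball 0 1"
  then show "C_psi_theta a (\<lambda>z. cnj c * C_psi_theta a f z) z = toeplitz (trig_coeffs 0 c 0) f z"
    using C_psi_theta_involution[OF assms] toeplitz_const_symbol
    by (simp add: C_psi_theta_def mult.left_commute)
qed

lemma adjoint_toeplitz_trig_psi_fun:
  assumes "cmod a < 1" and "is_adjoint (toeplitz (trig_coeffs x y w)) S" and "v \<in> ball 0 1"
  shows "S (psi_fun a) v = (cnj y + cnj w * cnj a + cnj x * v) * psi_fun a v"
proof -
  define s where "s = complex_of_real (sqrt (1 - (cmod a)\<^sup>2))"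
  define p where "p = taylor_coeff (psi_fun a)"
  have p: "p n = cnj (s * a ^ n)" for n
    using assms(1) by (simp add: p_def s_def taylor_coeff_psi_fun)
  have coeff: "taylor_coeff (S (psi_fun a)) m =
      (cnj y + cnj w * cnj a) * p m + cnj x * (if m = 0 then 0 else p (m - 1))" for m
    using taylor_coeff_adjoint[OF assms(2) psi_fun_in_H2[OF assms(1)], of m]
      h2_inner_toeplitz_trig_power[of "psi_fun a" "\<lambda>n. s * a ^ n", folded p_def, OF p]
    by (simp add: p algebra_simps)
  have psi: "(\<lambda>n. p n * v ^ n) sums psi_fun a v"
    using psi_fun_sums[OF assms(1,3)] by (simp add: p_def taylor_coeff_psi_fun[OF assms(1)])
  have "(\<lambda>m. taylor_coeff (S (psi_fun a)) m * v ^ m) sums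
      ((cnj y + cnj w * cnj a) * psi_fun a v + cnj x * (v * psi_fun a v))"
    using sums_add[OF sums_mult[OF psi, of "cnj y + cnj w * cnj a"]
        sums_mult[OF sums_shift_power[OF psi], of "cnj x"]]
    by (simp add: coeff algebra_simps)
  moreover have "(\<lambda>m. taylor_coeff (S (psi_fun a)) m * v ^ m) sums S (psi_fun a) v"
    using assms psi_fun_in_H2 by (intro H2_sums) (auto simp: is_adjoint_def)
  ultimately show ?thesis by (simp add: sums_unique2 algebra_simps)
qed

lemma C_symmetric_toeplitz_trig_identity:
  assumes "cmod a < 1" and "a \<noteq> 0" and "cmod z < 1"
    and "C_symmetric (C_psi_theta a) (toeplitz (trig_coeffs x y w))"
  shows "x * theta_fun a z = w * (z - a)"
proof -
  obtain S where adj: "is_adjoint (toeplitz (trig_coeffs x y w)) S"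
    and sym: "\<And>f z. f \<in> H2 \<Longrightarrow> z \<in> ball 0 1 \<Longrightarrow>
      C_psi_theta a (S (C_psi_theta a f)) z = toeplitz (trig_coeffs x y w) f z"
    using assms(4) unfolding C_symmetric_def by blast
  have one: "(\<lambda>_. 1) \<in> H2" using power_in_H2[of 0] by simp
  have C_one: "C_psi_theta a (\<lambda>_. 1) = psi_fun a" by (simp add: C_psi_theta_def fun_eq_iff)
  define v where "v = cnj (theta_fun a z)"
  have v: "v \<in> ball 0 1" using norm_theta_fun_less_1[OF assms(1-3)] by (simp add: v_def)
  have cnj_v: "cnj v = theta_fun a z" by (simp add: v_def)
  have "y + w * z = toeplitz (trig_coeffs x y w) (\<lambda>_. 1) z" by (simp add: toeplitz_trig_one)
  also have "\<dots> = psi_fun a z * cnj (S (psi_fun a) v)"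
    using sym[OF one, of z] assms(3) by (simp add: C_one C_psi_theta_def v_def)
  also have "\<dots> = (y + w * a + x * theta_fun a z) * (psi_fun a z * cnj (psi_fun a v))"
    by (simp add: adjoint_toeplitz_trig_psi_fun[OF assms(1) adj v] cnj_v algebra_simps)
  also have "\<dots> = y + w * a + x * theta_fun a z"
    using psi_fun_theta_fun[OF assms(1-3)] by (simp add: v_def)
  finally show ?thesis by (simp add: algebra_simps)
qed

lemma C_symmetric_toeplitz_trig_imp_zero:
  assumes "cmod a < 1" and "a \<noteq> 0"
    and "C_symmetric (C_psi_theta a) (toeplitz (trig_coeffs x y w))"
  shows "x = 0 \<and> w = 0"
proof -
  note eq = C_symmetric_toeplitz_trig_identity[OF assms(1,2) _ assms(3)]
  define r where "r = 1 + a * cnj a"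
  have "r = of_real (1 + (cmod a)\<^sup>2)" using complex_norm_square[of a] by (simp add: r_def)
  moreover have "1 + (cmod a)\<^sup>2 > 0" by (intro add_pos_nonneg) auto
  ultimately have r: "r \<noteq> 0" and r1: "r \<noteq> 1" using assms(2) by (auto simp del: of_real_add)
  have "theta_fun a 0 = cnj a" using assms(2) by (simp add: theta_fun_def)
  then have e0: "x * cnj a = - w * a" using eq[of 0] by simp
  have "theta_fun a (- a) = 2 * cnj a / r" using assms(2) r by (simp add: theta_fun_def r_def field_simps)
  then have "x * (2 * cnj a / r) = - 2 * w * a" using eq[of "- a"] assms(1) by simp
  then have "x * cnj a * (1 - r) = 0" using e0 r by (simp add: field_simps)
  then have "x = 0" using assms(2) r1 by simp
  then show ?thesis using e0 assms(2) by simp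
qed

lemma trig_poly_const_on_circle_iff:
  "(\<exists>c. \<forall>z. cmod z = 1 \<longrightarrow> x * cnj z + y + w * z = c) \<longleftrightarrow> x = 0 \<and> w = 0"
proof
  assume "\<exists>c. \<forall>z. cmod z = 1 \<longrightarrow> x * cnj z + y + w * z = c"
  then obtain c where c: "\<And>z. cmod z = 1 \<Longrightarrow> x * cnj z + y + w * z = c" by blast
  have "2 * (x + w) = (x * cnj 1 + y + w * 1) - (x * cnj (- 1) + y + w * (- 1))"
    by (simp add: algebra_simps)
  also have "\<dots> = 0" using c[of 1] c[of "- 1"] by simp
  finally have "x + w = 0" by (metis mult_eq_0_iff zero_neq_numeral)
  have "2 * \<i> * (w - x) = (x * cnj \<i> + y + w * \<i>) - (x * cnj (- \<i>) + y + w * (- \<i>))"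
    by (simp add: algebra_simps)
  also have "\<dots> = 0" using c[of "\<i>"] c[of "- \<i>"] by simp
  finally have "w - x = 0" by simp
  with \<open>x + w = 0\<close> show "x = 0 \<and> w = 0" by simp
qed auto

theorem proposition8p4:
  fixes \<alpha> phim1 phi0 phi1 :: complex
  assumes "\<alpha> \<in> ball 0 1" and "\<alpha> \<noteq> 0"
  shows "C_symmetric (C_psi_theta \<alpha>) (toeplitz (trig_coeffs phim1 phi0 phi1))
     \<longleftrightarrow> (\<exists>c. \<forall>z. cmod z = 1 \<longrightarrow> phim1 * cnj z + phi0 + phi1 * z = c)"
  unfolding trig_poly_const_on_circle_iff
proof
  have \<alpha>: "cmod \<alpha> < 1" using assms(1) by simp
  show "phim1 = 0 \<and> phi1 = 0"
    if "C_symmetric (C_psi_theta \<alpha>) (toeplitz (trig_coeffs phim1 phi0 phi1))"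
    using C_symmetric_toeplitz_trig_imp_zero[OF \<alpha> assms(2) that] .
  show "C_symmetric (C_psi_theta \<alpha>) (toeplitz (trig_coeffs phim1 phi0 phi1))"
    if "phim1 = 0 \<and> phi1 = 0"
    using C_symmetric_toeplitz_const[OF \<alpha> assms(2)] that by simp
qed

end
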